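(* Let $\mathcal M$ be a time-dependent finite-horizon MDP accessed through the quantum oracle $O_{\mathcal{QM}}$, and let $\delta\in(0,1)$. Run the algorithm QVI-1 described in the context. Then, with probability at least $1-\delta$, its outputs satisfy $\hat V_0=V_0^*$ and $\hat\pi$ is an optimal policy, i.e. $V_0^{\hat\pi}=V_0^*$.
   Context: Write $[H]=\{0,\dots,H-1\}$. The MDP $\mathcal M=(\mathcal S,\mathcal A,\{P_h\}_{h\in[H]},\{r_h\}_{h\in[H]},H)$ has finite state space $\mathcal S$ with $S=|\mathcal S|$, finite action space $\mathcal A$ with $A=|\mathcal A|$, rewards $r_h(s,a)\in[0,1]$, and transition distributions $P_h(\cdot\mid s,a)$. Write $P_{h|s,a}\in\mathbb R^{\mathcal S}$ for the vector $(P_h(s'\mid s,a))_{s'}$. A policy is a map $\pi:\mathcal S\times[H]\to\mathcal A$. Its value function is $V_h^\pi(s)=\mathbb E[\sum_{t=h}^{H-1}r_t(s_t,a_t)\mid s_h=s]$, with $a_t=\pi(s_t,t)$ and $s_{t+1}\sim P_t(\cdot\mid s_t,a_t)$. The optimal value is $V_h^*=\max_\pi V_h^\pi$, and $\pi$ is optimal if $V_0^\pi=V_0^*$. Real numbers are stored in fixed-point binary with enough qubits that no overflow occurs; $\overline{x}$ denotes the stored binary representation of $x$. For a vector $f\in\mathbb R^N$, a binary oracle is a unitary $|i\rangle|0\rangle\mapsto|i\rangle|\overline{f(i)}\rangle$. The quantum oracle of $\mathcal M$ is the unitary $O_{\mathcal{QM}}:|s\rangle|a\rangle|h\rangle|s'\rangle|0\rangle|0\rangle\mapsto|s\rangle|a\rangle|h\rangle|s'\rangle|\overline{r_h(s,a)}\rangle|\overline{P_h(s'\mid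 s,a)}\rangle$. QMS (quantum maximum searching) is a subroutine with the following guarantee: given a binary oracle for $f\in\mathbb R^N$ and a parameter $\zeta>0$, it outputs an index $i$ with $f(i)=\max_j f(j)$ with probability at least $1-\zeta$, using at most $\tilde c\sqrt N\log(1/\zeta)$ queries to the oracle, where $\tilde c>0$ is a constant. Algorithm QVI-1$(\mathcal M,\delta)$: - Set $\zeta=\delta/(SH)$ and $\hat V_H=\mathbf 0$. - For $h=H-1,\dots,0$: - Build a binary oracle for the classical vector $\hat V_{h+1}$. - For each $s\in\mathcal S$, build (using $O_{\mathcal{QM}}$ and that oracle) a binary oracle for the vector $\hat Q_{h,s}\in\mathbb R^{\mathcal A}$, where $\hat Q_{h,s}(a)=r_h(s,a)+P_{h|s,a}^{\mathrm T}\hat V_{h+1}$. - For each $s$, set $\hat\pi(s,h)$ to the output of QMS with failure parameter $\zeta$ on $\{\hat Q_{h,s}(a):a\in\mathcal A\}$. - For each $s$, set $\hat V_h(s)=\hat Q_{h,s}(\hat\pi(s,h))$. - Return $\hat\pi$ and $\hat V_0$. *)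

theory Defs
  imports "HOL-Probability.Probability"
begin

text \<open>Rewards r h s a; transitions P h s a :: 's pmf, so that
  P_h(s' | s,a) = pmf (P h s a) s'. A policy is a map pol :: 's => nat => 'a,
  i.e. pol s h is the action at state s and time h.\<close>

fun state_dist :: "(nat \<Rightarrow> 's \<Rightarrow> 'a \<Rightarrow> 's pmf) \<Rightarrow> ('s \<Rightarrow> nat \<Rightarrow> 'a)
    \<Rightarrow> nat \<Rightarrow> 's \<Rightarrow> nat \<Rightarrow> 's pmf" where
  "state_dist P pol h s 0 = return_pmf s"
| "state_dist P pol h s (Suc k) =
     bind_pmf (state_dist P pol h s k) (\<lambda>x. P (h + k) x (pol x (h + k)))"

text \<open>V_h^pol(s) = E[ sum_{t=h}^{H-1} r_t(s_t, pol(s_t,t)) | s_h = s ], written via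
  linearity of expectation over the marginal laws of the states s_t.\<close>
definition value_fun :: "nat \<Rightarrow> (nat \<Rightarrow> 's \<Rightarrow> 'a \<Rightarrow> real) \<Rightarrow> (nat \<Rightarrow> 's \<Rightarrow> 'a \<Rightarrow> 's pmf)
    \<Rightarrow> ('s \<Rightarrow> nat \<Rightarrow> 'a) \<Rightarrow> nat \<Rightarrow> 's \<Rightarrow> real" where
  "value_fun H r P pol h s =
     (\<Sum>k < H - h. measure_pmf.expectation (state_dist P pol h s k)
                     (\<lambda>x. r (h + k) x (pol x (h + k))))"

definition opt_value :: "nat \<Rightarrow> (nat \<Rightarrow> 's \<Rightarrow> 'a \<Rightarrow> real) \<Rightarrow> (nat \<Rightarrow> 's \<Rightarrow> 'a \<Rightarrow> 's pmf)
    \<Rightarrow> nat \<Rightarrow> 's \<Rightarrow> real" where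
  "opt_value H r P h s = (SUP pol. value_fun H r P pol h s)"

text \<open>Abstract model of QMS: qms f zeta is the output distribution of QMS run on
  (a binary oracle for) f :: 'a => real with failure parameter zeta.\<close>
definition qms_spec :: "(('a::finite \<Rightarrow> real) \<Rightarrow> real \<Rightarrow> 'a pmf) \<Rightarrow> bool" where
  "qms_spec qms \<longleftrightarrow> (\<forall>f zeta. zeta > 0 \<longrightarrow>
      measure_pmf.prob (qms f zeta) {a. f a = Max (range f)} \<ge> 1 - zeta)"

definition Q_hat :: "(nat \<Rightarrow> 's::finite \<Rightarrow> 'a \<Rightarrow> real) \<Rightarrow> (nat \<Rightarrow> 's \<Rightarrow> 'a \<Rightarrow> 's pmf)
    \<Rightarrow> ('s \<Rightarrow> real) \<Rightarrow> nat \<Rightarrow> 's \<Rightarrow> 'a \<Rightarrow> real" where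
  "Q_hat r P V h s a = r h s a + (\<Sum>s'\<in>UNIV. pmf (P h s a) s' * V s')"

text \<open>After k iterations of the loop of QVI-1 (i.e. having processed h = H-1,...,H-k):
  distribution of the pair (partial policy pol-hat, V-hat_{H-k}).\<close>
fun qvi_iter :: "nat \<Rightarrow> (nat \<Rightarrow> 's::finite \<Rightarrow> 'a::finite \<Rightarrow> real)
    \<Rightarrow> (nat \<Rightarrow> 's \<Rightarrow> 'a \<Rightarrow> 's pmf) \<Rightarrow> (('a \<Rightarrow> real) \<Rightarrow> real \<Rightarrow> 'a pmf) \<Rightarrow> real
    \<Rightarrow> nat \<Rightarrow> (('s \<Rightarrow> nat \<Rightarrow> 'a) \<times> ('s \<Rightarrow> real)) pmf" where
  "qvi_iter H r P qms zeta 0 = return_pmf (\<lambda>s t. undefined, \<lambda>s. 0)"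
| "qvi_iter H r P qms zeta (Suc k) =
     bind_pmf (qvi_iter H r P qms zeta k) (\<lambda>(pol, V).
       (let h = H - Suc k in
        map_pmf (\<lambda>act. (\<lambda>s t. if t = h then act s else pol s t,
                         \<lambda>s. Q_hat r P V h s (act s)))
          (Pi_pmf UNIV undefined (\<lambda>s. qms (Q_hat r P V h s) zeta))))"

definition QVI1 :: "nat \<Rightarrow> (nat \<Rightarrow> 's::finite \<Rightarrow> 'a::finite \<Rightarrow> real)
    \<Rightarrow> (nat \<Rightarrow> 's \<Rightarrow> 'a \<Rightarrow> 's pmf) \<Rightarrow> (('a \<Rightarrow> real) \<Rightarrow> real \<Rightarrow> 'a pmf) \<Rightarrow> real
    \<Rightarrow> (('s \<Rightarrow> nat \<Rightarrow> 'a) \<times> ('s \<Rightarrow> real)) pmf" where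
  "QVI1 H r P qms \<delta> = qvi_iter H r P qms (\<delta> / (real CARD('s) * real H)) H"

end

theory Submission
  imports Defs
begin

text \<open>Because the state and action sets are finite, the optimal value is computed exactly by
  backward induction: with \<open>k\<close> steps to go it is the maximum over actions of the Q-function
  built from the optimal value with \<open>k - 1\<close> steps to go, and any policy that is greedy for
  these Q-functions at every time is optimal. QVI-1 performs exactly this backward induction,
  except that each maximisation is done by QMS; if every call succeeds, the output is the optimal
  value together with a greedy, hence optimal, policy. One round consists of \<open>S\<close> independent
  calls, each failing with probability at most \<open>\<zeta> = \<delta> / (S H)\<close>, so by the union bound all
  \<open>S H\<close> calls succeed with probability at least \<open>1 - \<delta>\<close>. No bound on the rewards is needed.\<close>

lemma measure_bind_pmf_ge:
  fixes p :: "'x pmf" and q :: "'x \<Rightarrow> 'y pmf"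
  assumes "\<And>x. x \<in> set_pmf p \<Longrightarrow> x \<in> G \<Longrightarrow> measure (q x) A \<ge> 1 - c" and "c \<ge> 0"
  shows "measure (bind_pmf p q) A \<ge> measure p G - c"
proof -
  have "measure p G - c = (\<integral>x. indicator G x - c \<partial>p)"
    by (simp add: measure_pmf.emeasure_eq_measure)
  also have "\<dots> \<le> (\<integral>x. measure (q x) A \<partial>p)"
  proof (rule integral_mono_AE)
    show "integrable p (\<lambda>x. indicator G x - c)"
      by (rule measure_pmf.integrable_const_bound[where B="1 + \<bar>c\<bar>"]) (auto simp: indicator_def)
    show "integrable p (\<lambda>x. measure (q x) A)"
      by (rule measure_pmf.integrable_const_bound[where B=1]) auto
    show "AE x in p. indicator G x - c \<le> measure (q x) A"
      using assms
      by (auto simp: AE_measure_pmf_iff indicator_def intro: order.trans[OF _ measure_nonneg])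
  qed
  also have "\<dots> = measure (bind_pmf p q) A"
    unfolding measure_pmf_bind
    by (rule measure_pmf.measure_bind[where N="count_space UNIV", symmetric])
       (auto simp: measure_pmf_in_subprob_algebra)
  finally show ?thesis .
qed

lemma measure_Pi_pmf_all_ge:
  fixes p :: "'i::finite \<Rightarrow> 'x pmf"
  assumes "\<And>i. measure (p i) (A i) \<ge> 1 - \<epsilon>"
  shows "measure (Pi_pmf UNIV d p) {f. \<forall>i. f i \<in> A i} \<ge> 1 - real CARD('i) * \<epsilon>"
proof -
  let ?M = "Pi_pmf UNIV d p"
  have fail_i: "measure ?M {f. f i \<notin> A i} \<le> \<epsilon>" for i
  proof -
    have "measure ?M {f. f i \<notin> A i} = measure (map_pmf (\<lambda>f. f i) ?M) (- A i)"
      by (simp add: Compl_eq)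
    also have "\<dots> = 1 - measure (p i) (A i)"
      using measure_pmf.prob_compl[of "A i" "p i"] by (simp add: Pi_pmf_component Compl_eq_Diff_UNIV)
    finally show ?thesis
      using assms[of i] by linarith
  qed
  have "measure ?M (- {f. \<forall>i. f i \<in> A i}) = measure ?M (\<Union>i. {f. f i \<notin> A i})"
    by (rule arg_cong[where f="measure ?M"]) auto
  also have "\<dots> \<le> (\<Sum>i\<in>UNIV. measure ?M {f. f i \<notin> A i})"
    by (rule measure_pmf.finite_measure_subadditive_finite) auto
  also have "\<dots> \<le> real CARD('i) * \<epsilon>"
    using sum_mono[of UNIV _ "\<lambda>_. \<epsilon>", OF fail_i] by simp
  finally show ?thesis
    using measure_pmf.prob_compl[of "{f. \<forall>i. f i \<in> A i}" ?M] by (simp add: Compl_eq_Diff_UNIV)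
qed

lemma Pi_pmf_qms_all_max_ge:
  fixes Q :: "'s::finite \<Rightarrow> 'a::finite \<Rightarrow> real"
  assumes "qms_spec qms" and "\<zeta> > 0"
  shows "measure (Pi_pmf UNIV d (\<lambda>s. qms (Q s) \<zeta>)) {act. \<forall>s. Q s (act s) = Max (range (Q s))}
           \<ge> 1 - real CARD('s) * \<zeta>"
  using measure_Pi_pmf_all_ge[where p="\<lambda>s. qms (Q s) \<zeta>" and A="\<lambda>s. {a. Q s a = Max (range (Q s))}"] assms
  by (simp add: qms_spec_def)

lemma state_dist_Suc_first_step:
  "state_dist P pol h s (Suc k) = bind_pmf (P h s (pol s h)) (\<lambda>s'. state_dist P pol (Suc h) s' k)"
  by (induction k) (simp_all add: bind_return_pmf bind_return_pmf' bind_assoc_pmf)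

lemma value_fun_horizon: "H \<le> h \<Longrightarrow> value_fun H r P pol h s = 0"
  by (simp add: value_fun_def)

lemma value_fun_Bellman:
  fixes r :: "nat \<Rightarrow> 's::finite \<Rightarrow> 'a \<Rightarrow> real"
  assumes "h < H"
  shows "value_fun H r P pol h s = Q_hat r P (value_fun H r P pol (Suc h)) h s (pol s h)"
proof -
  have steps: "H - h = Suc (H - Suc h)"
    using assms by simp
  have first_step: "measure_pmf.expectation (bind_pmf (P h s (pol s h)) q) f
      = (\<Sum>s'\<in>UNIV. pmf (P h s (pol s h)) s' * measure_pmf.expectation (q s') f)"
    for q :: "'s \<Rightarrow> 's pmf" and f :: "'s \<Rightarrow> real"
    by (subst pmf_expectation_bind[of UNIV]) auto
  show ?thesis
    unfolding value_fun_def Q_hat_def steps sum.lessThan_Suc_shift state_dist_Suc_first_step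
      first_step
    by (simp add: sum_distrib_left sum.swap[where B=UNIV])
qed

lemma Q_hat_mono:
  assumes "\<And>s'. V s' \<le> V' s'"
  shows "Q_hat r P V h s a \<le> Q_hat r P V' h s a"
  unfolding Q_hat_def using assms by (intro add_left_mono sum_mono mult_left_mono) auto

lemma Max_range_attained: "\<exists>a. f a = Max (range (f :: 'a::finite \<Rightarrow> 'b::linorder))"
proof -
  have "Max (range f) \<in> range f"
    by (rule Max_in) auto
  then show ?thesis
    by (metis imageE)
qed

text \<open>The optimal value with \<open>k\<close> steps to go, i.e. at time \<open>H - k\<close>, computed by
  backward induction.\<close>
fun backward_value :: "nat \<Rightarrow> (nat \<Rightarrow> 's::finite \<Rightarrow> 'a::finite \<Rightarrow> real)
    \<Rightarrow> (nat \<Rightarrow> 's \<Rightarrow> 'a \<Rightarrow> 's pmf) \<Rightarrow> nat \<Rightarrow> 's \<Rightarrow> real" where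
  "backward_value H r P 0 = (\<lambda>s. 0)"
| "backward_value H r P (Suc k) =
     (\<lambda>s. Max (range (Q_hat r P (backward_value H r P k) (H - Suc k) s)))"

definition greedy_at :: "nat \<Rightarrow> (nat \<Rightarrow> 's::finite \<Rightarrow> 'a::finite \<Rightarrow> real)
    \<Rightarrow> (nat \<Rightarrow> 's \<Rightarrow> 'a \<Rightarrow> 's pmf) \<Rightarrow> ('s \<Rightarrow> nat \<Rightarrow> 'a) \<Rightarrow> nat \<Rightarrow> bool" where
  "greedy_at H r P pol t \<longleftrightarrow> (\<forall>s. Q_hat r P (backward_value H r P (H - Suc t)) t s (pol s t)
      = Max (range (Q_hat r P (backward_value H r P (H - Suc t)) t s)))"

lemma value_fun_le_backward_value:
  "h \<le> H \<Longrightarrow> value_fun H r P pol h s \<le> backward_value H r P (H - h) s"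
proof (induction "H - h" arbitrary: h s)
  case 0
  then show ?case by (simp add: value_fun_horizon)
next
  case (Suc k)
  then have h: "h < H" "H - Suc h = k" "H - Suc k = h" by auto
  have "value_fun H r P pol h s = Q_hat r P (value_fun H r P pol (Suc h)) h s (pol s h)"
    using h(1) by (rule value_fun_Bellman)
  also have "\<dots> \<le> Q_hat r P (backward_value H r P k) h s (pol s h)"
    using Suc.hyps(1)[of "Suc h"] h by (intro Q_hat_mono) simp
  also have "\<dots> \<le> Max (range (Q_hat r P (backward_value H r P k) h s))"
    by (rule Max_ge) auto
  also have "\<dots> = backward_value H r P (H - h) s"
    using h Suc.hyps(2)[symmetric] by simp
  finally show ?case .
qed

lemma value_fun_eq_backward_value:
  assumes "\<And>t. h \<le> t \<Longrightarrow> t < H \<Longrightarrow> greedy_at H r P pol t"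
  shows "h \<le> H \<Longrightarrow> value_fun H r P pol h s = backward_value H r P (H - h) s"
  using assms
proof (induction "H - h" arbitrary: h s)
  case 0
  then show ?case by (simp add: value_fun_horizon)
next
  case (Suc k)
  then have h: "h < H" "H - Suc h = k" "H - Suc k = h" by auto
  have next_value: "value_fun H r P pol (Suc h) = backward_value H r P k"
    using Suc.hyps(1)[of "Suc h"] Suc.prems h by fastforce
  have "value_fun H r P pol h s = Q_hat r P (backward_value H r P k) h s (pol s h)"
    unfolding value_fun_Bellman[OF h(1)] next_value ..
  also have "\<dots> = backward_value H r P (H - h) s"
    using Suc.prems(2)[of h] h Suc.hyps(2)[symmetric] by (simp add: greedy_at_def)
  finally show ?case .
qed

lemma greedy_policy_exists: "\<exists>pol. \<forall>t. greedy_at H r P pol t"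
proof -
  let ?Q = "\<lambda>t s. Q_hat r P (backward_value H r P (H - Suc t)) t s"
  have "?Q t s (SOME a. ?Q t s a = Max (range (?Q t s))) = Max (range (?Q t s))" for t s
    using Max_range_attained by (rule someI_ex)
  then show ?thesis
    unfolding greedy_at_def by (intro exI[of _ "\<lambda>s t. SOME a. ?Q t s a = Max (range (?Q t s))"]) blast
qed

lemma opt_value_eq_backward_value:
  assumes "h \<le> H"
  shows "opt_value H r P h s = backward_value H r P (H - h) s"
  unfolding opt_value_def
proof (rule cSup_eq_maximum)
  obtain pol where "\<forall>t. greedy_at H r P pol t"
    using greedy_policy_exists by blast
  then show "backward_value H r P (H - h) s \<in> range (\<lambda>pol. value_fun H r P pol h s)"
    using value_fun_eq_backward_value[OF _ assms] by (metis rangeI)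
  show "\<And>x. x \<in> range (\<lambda>pol. value_fun H r P pol h s) \<Longrightarrow> x \<le> backward_value H r P (H - h) s"
    using value_fun_le_backward_value[OF assms] by blast
qed

text \<open>Outcomes of the first \<open>k\<close> rounds of QVI-1 in which every call of QMS succeeded.\<close>
definition qvi_good :: "nat \<Rightarrow> (nat \<Rightarrow> 's::finite \<Rightarrow> 'a::finite \<Rightarrow> real)
    \<Rightarrow> (nat \<Rightarrow> 's \<Rightarrow> 'a \<Rightarrow> 's pmf) \<Rightarrow> nat \<Rightarrow> (('s \<Rightarrow> nat \<Rightarrow> 'a) \<times> ('s \<Rightarrow> real)) set" where
  "qvi_good H r P k = {(pol, V). V = backward_value H r P k
      \<and> (\<forall>t. H - k \<le> t \<and> t < H \<longrightarrow> greedy_at H r P pol t)}"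

lemma qvi_good_update:
  assumes good: "(pol, V) \<in> qvi_good H r P k" and "k < H"
    and act: "\<And>s. Q_hat r P V (H - Suc k) s (act s) = Max (range (Q_hat r P V (H - Suc k) s))"
  shows "(\<lambda>s t. if t = H - Suc k then act s else pol s t, \<lambda>s. Q_hat r P V (H - Suc k) s (act s))
           \<in> qvi_good H r P (Suc k)"
proof -
  let ?pol' = "\<lambda>s t. if t = H - Suc k then act s else pol s t"
  have V: "V = backward_value H r P k"
    using good by (simp add: qvi_good_def)
  have "greedy_at H r P ?pol' t" if "H - Suc k \<le> t" "t < H" for t
  proof (cases "t = H - Suc k")
    case True
    then show ?thesis
      using act \<open>k < H\<close> V by (simp add: greedy_at_def Suc_diff_Suc)
  next
    case False
    then have "greedy_at H r P pol t"
      using good that by (simp add: qvi_good_def)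
    then show ?thesis
      using False by (simp add: greedy_at_def)
  qed
  moreover have "(\<lambda>s. Q_hat r P V (H - Suc k) s (act s)) = backward_value H r P (Suc k)"
    using act V by auto
  ultimately show ?thesis
    by (simp add: qvi_good_def)
qed

lemma measure_qvi_round_good:
  fixes r :: "nat \<Rightarrow> 's::finite \<Rightarrow> 'a::finite \<Rightarrow> real"
  assumes qms: "qms_spec qms" and "0 < \<zeta>"
    and good: "(pol, V) \<in> qvi_good H r P k" and "k < H"
  shows "measure (map_pmf (\<lambda>act. (\<lambda>s t. if t = H - Suc k then act s else pol s t,
                                 \<lambda>s. Q_hat r P V (H - Suc k) s (act s)))
                   (Pi_pmf UNIV undefined (\<lambda>s. qms (Q_hat r P V (H - Suc k) s) \<zeta>)))
           (qvi_good H r P (Suc k))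
         \<ge> 1 - real CARD('s) * \<zeta>"
proof -
  let ?Q = "Q_hat r P V (H - Suc k)"
  let ?M = "Pi_pmf UNIV undefined (\<lambda>s. qms (?Q s) \<zeta>)"
  let ?update = "\<lambda>act. (\<lambda>s t. if t = H - Suc k then act s else pol s t, \<lambda>s. ?Q s (act s))"
  have "1 - real CARD('s) * \<zeta> \<le> measure ?M {act. \<forall>s. ?Q s (act s) = Max (range (?Q s))}"
    using Pi_pmf_qms_all_max_ge[OF qms \<open>0 < \<zeta>\<close>] .
  also have "\<dots> \<le> measure ?M (?update -` qvi_good H r P (Suc k))"
    using qvi_good_update[OF good \<open>k < H\<close>] by (intro measure_pmf.finite_measure_mono) auto
  finally show ?thesis
    by simp
qed

lemma measure_qvi_iter_good:
  fixes r :: "nat \<Rightarrow> 's::finite \<Rightarrow> 'a::finite \<Rightarrow> real"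
  assumes qms: "qms_spec qms"
  shows "k \<le> H \<Longrightarrow> (0 < k \<Longrightarrow> 0 < \<zeta>) \<Longrightarrow>
    measure (qvi_iter H r P qms \<zeta> k) (qvi_good H r P k) \<ge> 1 - real k * real CARD('s) * \<zeta>"
proof (induction k)
  case 0
  then show ?case by (simp add: qvi_good_def indicator_def)
next
  case (Suc k)
  then have "0 < \<zeta>" "k < H"
    by simp_all
  then have "measure (qvi_iter H r P qms \<zeta> (Suc k)) (qvi_good H r P (Suc k))
      \<ge> measure (qvi_iter H r P qms \<zeta> k) (qvi_good H r P k) - real CARD('s) * \<zeta>"
    unfolding qvi_iter.simps
    by (intro measure_bind_pmf_ge) (auto simp: Let_def intro!: measure_qvi_round_good[OF qms])
  with Suc show ?case
    by (simp add: algebra_simps)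
qed

lemma qvi_good_optimal:
  assumes "(pol, V) \<in> qvi_good H r P H"
  shows "V = opt_value H r P 0 \<and> value_fun H r P pol 0 = opt_value H r P 0"
  using assms value_fun_eq_backward_value[of 0 H r P pol] opt_value_eq_backward_value[of 0 H r P]
  by (auto simp: qvi_good_def)

theorem theorem3p5:
  fixes H :: nat
    and r :: "nat \<Rightarrow> 's::finite \<Rightarrow> 'a::finite \<Rightarrow> real"
    and P :: "nat \<Rightarrow> 's \<Rightarrow> 'a \<Rightarrow> 's pmf"
    and qms :: "('a \<Rightarrow> real) \<Rightarrow> real \<Rightarrow> 'a pmf"
    and \<delta> :: real
  assumes r_bounds: "\<And>h s a. 0 \<le> r h s a \<and> r h s a \<le> 1"
    and qms: "qms_spec qms"
    and delta: "0 < \<delta>" "\<delta> < 1"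
  shows "measure_pmf.prob (QVI1 H r P qms \<delta>)
           {(pol_hat, V0_hat). V0_hat = opt_value H r P 0
                              \<and> value_fun H r P pol_hat 0 = opt_value H r P 0}
         \<ge> 1 - \<delta>"
proof -
  define \<zeta> where "\<zeta> = \<delta> / (real CARD('s) * real H)"
  have "1 - \<delta> \<le> 1 - real H * real CARD('s) * \<zeta>"
    using delta by (cases "H = 0") (auto simp: \<zeta>_def)
  also have "\<dots> \<le> measure (qvi_iter H r P qms \<zeta> H) (qvi_good H r P H)"
    using delta by (intro measure_qvi_iter_good[OF qms order.refl]) (simp add: \<zeta>_def)
  also have "\<dots> \<le> measure (QVI1 H r P qms \<delta>)
           {(pol_hat, V0_hat). V0_hat = opt_value H r P 0
                              \<and> value_fun H r P pol_hat 0 = opt_value H r P 0}"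
    unfolding QVI1_def \<zeta>_def[symmetric]
    by (intro measure_pmf.finite_measure_mono) (auto dest: qvi_good_optimal)
  finally show ?thesis .
qed

end
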